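(* Let $D\ge3$, $q\ge2$, and let $Y$ be a code in the Hamming scheme $\mathrm H(D,q)$ (i.e. $Y\subseteq\mathcal Q^D$ with $1<|Y|<q^D$, $\mathcal Q=\{0,\dots,q-1\}$). Let $\delta=\delta(Y)$ be its minimum distance, $\delta^*=\delta^*(Y)$ its dual distance and $s^*=s^*(Y)$ its dual degree. Then $\delta\le\delta^*+s^*-1$, unless $q=2$ and $Y$ is a binary repetition code, i.e. $Y=\{u,v\}$ with $u,v$ differing in all $D$ coordinates.
   Context: The Hamming scheme $\mathrm H(D,q)$ has vertex set $X=\mathcal Q^D$ and relations $R_i=\{(u,v):u,v\text{ differ in exactly }i\text{ coordinates}\}$, with associate matrices $A_i$ and primitive idempotents $E_0=|X|^{-1}J,E_1,\dots,E_D$ in the standard (Krawtchouk) cometric ordering. Let $\chi_Y=\sum_{y\in Y}\hat y\in\mathbb C^X$. Then $\delta(Y)=\min\{i\ne0:\chi_Y^{\top}A_i\chi_Y\ne0\}$, $\delta^*(Y)=\min\{j\ne0:E_j\chi_Y\ne0\}$, $s^*(Y)=|\{j\ne0:E_j\chi_Y\ne0\}|$. *)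

theory Defs
  imports Complex_Main
begin

text \<open>Vertex set Q^D of the Hamming scheme H(D,q), Q = {0..q-1}: words are functions
  nat => nat with entries < q on coordinates 0..D-1 and 0 outside (canonical padding).\<close>
definition hamming_space :: "nat \<Rightarrow> nat \<Rightarrow> (nat \<Rightarrow> nat) set" where
  "hamming_space D q = {u. (\<forall>i<D. u i < q) \<and> (\<forall>i\<ge>D. u i = 0)}"

definition hdist :: "nat \<Rightarrow> (nat \<Rightarrow> nat) \<Rightarrow> (nat \<Rightarrow> nat) \<Rightarrow> nat" where
  "hdist D u v = card {i. i < D \<and> u i \<noteq> v i}"

definition assoc_mat :: "nat \<Rightarrow> nat \<Rightarrow> (nat \<Rightarrow> nat) \<Rightarrow> (nat \<Rightarrow> nat) \<Rightarrow> real" where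
  "assoc_mat D i u v = (if hdist D u v = i then 1 else 0)"

definition krawtchouk :: "nat \<Rightarrow> nat \<Rightarrow> nat \<Rightarrow> nat \<Rightarrow> real" where
  "krawtchouk D q j i = (\<Sum>h\<le>j. (-1) ^ h * (real q - 1) ^ (j - h)
        * real (i choose h) * real ((D - i) choose (j - h)))"

text \<open>Primitive idempotent E_j = |X|^{-1} sum_i Q_{ij} A_i with Q_{ij} = K_j(i)
  (standard Krawtchouk / cometric ordering); E_0 = |X|^{-1} J.\<close>
definition prim_idem :: "nat \<Rightarrow> nat \<Rightarrow> nat \<Rightarrow> (nat \<Rightarrow> nat) \<Rightarrow> (nat \<Rightarrow> nat) \<Rightarrow> real" where
  "prim_idem D q j u v = (\<Sum>i\<le>D. krawtchouk D q j i * assoc_mat D i u v) / real q ^ D"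

definition quad_A :: "nat \<Rightarrow> (nat \<Rightarrow> nat) set \<Rightarrow> nat \<Rightarrow> real" where
  "quad_A D Y i = (\<Sum>x\<in>Y. \<Sum>y\<in>Y. assoc_mat D i x y)"

definition Echi :: "nat \<Rightarrow> nat \<Rightarrow> (nat \<Rightarrow> nat) set \<Rightarrow> nat \<Rightarrow> (nat \<Rightarrow> nat) \<Rightarrow> real" where
  "Echi D q Y j u = (\<Sum>y\<in>Y. prim_idem D q j u y)"

definition min_dist :: "nat \<Rightarrow> (nat \<Rightarrow> nat) set \<Rightarrow> nat" where
  "min_dist D Y = Min {i \<in> {1..D}. quad_A D Y i \<noteq> 0}"

definition dual_support :: "nat \<Rightarrow> nat \<Rightarrow> (nat \<Rightarrow> nat) set \<Rightarrow> nat set" where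
  "dual_support D q Y = {j \<in> {1..D}. \<exists>u\<in>hamming_space D q. Echi D q Y j u \<noteq> 0}"

definition dual_dist :: "nat \<Rightarrow> nat \<Rightarrow> (nat \<Rightarrow> nat) set \<Rightarrow> nat" where
  "dual_dist D q Y = Min (dual_support D q Y)"

definition dual_degree :: "nat \<Rightarrow> nat \<Rightarrow> (nat \<Rightarrow> nat) set \<Rightarrow> nat" where
  "dual_degree D q Y = card (dual_support D q Y)"

end

(* Assume every two codewords are at distance at least m + s, where m = delta* and s = s*, and let T be
   the dual support.  In terms of the additive characters chi_b(y) = omega^(b . y) of (Z/q)^D, a weight j
   lies in T iff the character sums F(b) = sum_{y in Y} chi_b(y) do not all vanish on the words b of
   weight j.  Fix a word a of weight m and let R be its zero set, |R| = D - m.  The polynomial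
   P(x) = prod_{tau in T, tau > m} (x - (tau - m)) has degree s - 1 and P(0) <> 0; write it as
   sum_i c_i K_i in the Krawtchouk basis of H(D - m, q).  Summing P(wt b) conj(chi_b(y0)) chi_b(y) over
   the words b supported on R, against chi_a(y) over y in Y, in two ways gives
   c_0 q^(D-m) chi_a(y0) = P(0) F(a) for every codeword y0.  As F(a) <> 0 for some a of weight m, c_0 <> 0,
   hence every chi_a with wt a = m is constant on Y.  Testing this on words of weight m forces q = 2 and
   any two codewords to differ in all coordinates, i.e. Y is a binary repetition code. *)

theory Submission
  imports Defs "HOL-Analysis.Complex_Transcendental" "HOL-Computational_Algebra.Polynomial"
begin

section \<open>Words supported on a set of coordinates\<close>

definition words :: "nat set \<Rightarrow> nat \<Rightarrow> (nat \<Rightarrow> nat) set" where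
  "words R q = {b. (\<forall>i\<in>R. b i < q) \<and> (\<forall>i. i \<notin> R \<longrightarrow> b i = 0)}"

definition weight :: "nat set \<Rightarrow> (nat \<Rightarrow> nat) \<Rightarrow> nat" where
  "weight R b = card {i\<in>R. b i \<noteq> 0}"

definition dist_on :: "nat set \<Rightarrow> (nat \<Rightarrow> nat) \<Rightarrow> (nat \<Rightarrow> nat) \<Rightarrow> nat" where
  "dist_on R x y = card {i\<in>R. x i \<noteq> y i}"

lemma hamming_space_eq_words: "hamming_space D q = words {..<D} q"
  by (auto simp: hamming_space_def words_def)

lemma hdist_eq_dist_on: "hdist D u v = dist_on {..<D} u v"
  by (simp add: hdist_def dist_on_def lessThan_def)

lemma dist_on_le_card: "finite R \<Longrightarrow> dist_on R x y \<le> card R"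
  unfolding dist_on_def by (rule card_mono) auto

lemma weight_le_card: "finite R \<Longrightarrow> weight R b \<le> card R"
  unfolding weight_def by (rule card_mono) auto

lemma dist_on_zero_left: "dist_on R (\<lambda>_. 0) b = weight R b"
proof -
  have "{i\<in>R. 0 \<noteq> b i} = {i\<in>R. b i \<noteq> 0}" by auto
  then show ?thesis by (simp add: dist_on_def weight_def)
qed

lemma zero_in_words: "0 < q \<Longrightarrow> (\<lambda>_. 0) \<in> words R q"
  by (simp add: words_def)

lemma words_eq_zero_outside: "b \<in> words R q \<Longrightarrow> i \<notin> R \<Longrightarrow> b i = 0"
  by (simp add: words_def)

lemma words_eqI: "a \<in> words R q \<Longrightarrow> b \<in> words R q \<Longrightarrow> (\<And>i. i \<in> R \<Longrightarrow> a i = b i) \<Longrightarrow> a = b"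
  by (metis words_eq_zero_outside ext)

lemma words_neq_imp_coord_neq:
  assumes "y \<in> words R q" "y' \<in> words R q" "y \<noteq> y'"
  obtains i where "i \<in> R" "y i \<noteq> y' i"
  using assms words_eqI by blast

lemma weight_pos:
  assumes "b \<in> words R q" "finite R" "b \<noteq> (\<lambda>_. 0)"
  shows "0 < weight R b"
proof -
  obtain i where "b i \<noteq> 0" using assms(3) by auto
  moreover have "i \<in> R" using calculation assms(1) words_eq_zero_outside by metis
  ultimately show ?thesis unfolding weight_def using assms(2) by (auto simp: card_gt_0_iff)
qed

lemma hdist_eq_iff: "hdist D u v = D \<longleftrightarrow> (\<forall>k<D. u k \<noteq> v k)"
proof -
  have "{k. k < D \<and> u k \<noteq> v k} \<subseteq> {..<D}" by auto
  then have "hdist D u v = D \<longleftrightarrow> {k. k < D \<and> u k \<noteq> v k} = {..<D}"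
    unfolding hdist_def by (metis card_lessThan card_subset_eq finite_lessThan)
  then show ?thesis by auto
qed

lemma dist_on_le_add_card_diff:
  assumes "finite U" "R \<subseteq> U"
  shows "dist_on U x y \<le> dist_on R x y + card (U - R)"
proof -
  have "{i\<in>U. x i \<noteq> y i} \<subseteq> {i\<in>R. x i \<noteq> y i} \<union> (U - R)" by auto
  then have "dist_on U x y \<le> card ({i\<in>R. x i \<noteq> y i} \<union> (U - R))"
    unfolding dist_on_def using assms by (intro card_mono) (auto intro: finite_subset)
  also have "\<dots> \<le> dist_on R x y + card (U - R)"
    unfolding dist_on_def by (rule card_Un_le)
  finally show ?thesis .
qed

lemma card_filter_complement: "finite A \<Longrightarrow> card {i\<in>A. P i} + card {i\<in>A. \<not> P i} = card A"
  by (subst card_Un_disjoint[symmetric]) (auto intro: arg_cong[of _ _ card])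

lemma
  assumes "finite U" "a \<in> words U q" "b \<in> words {i\<in>U. a i = 0} q"
  shows words_add_disjoint: "(\<lambda>i. a i + b i) \<in> words U q"
    and weight_add_disjoint: "weight U (\<lambda>i. a i + b i) = weight U a + weight {i\<in>U. a i = 0} b"
proof -
  have b: "b i = 0" if "i \<notin> U \<or> a i \<noteq> 0" for i
    using assms(3) that by (auto simp: words_def)
  show "(\<lambda>i. a i + b i) \<in> words U q"
    using assms(2,3) b by (fastforce simp: words_def)
  have "{i\<in>U. a i + b i \<noteq> 0} = {i\<in>U. a i \<noteq> 0} \<union> {i\<in>{i\<in>U. a i = 0}. b i \<noteq> 0}"
    using b by auto
  then show "weight U (\<lambda>i. a i + b i) = weight U a + weight {i\<in>U. a i = 0} b"
    unfolding weight_def using assms(1) by (subst card_Un_disjoint[symmetric]) auto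
qed

lemma words_insert:
  assumes "r \<notin> R"
  shows "bij_betw (\<lambda>(c, b). b(r := c)) ({..<q} \<times> words R q) (words (insert r R) q)"
proof (rule bij_betw_byWitness[where f' = "\<lambda>b. (b r, b(r := 0))"])
  show "\<forall>x\<in>{..<q} \<times> words R q. (\<lambda>b. (b r, b(r := 0))) ((\<lambda>(c, b). b(r := c)) x) = x"
    using assms by (auto simp: words_def fun_eq_iff)
  show "(\<lambda>(c, b). b(r := c)) ` ({..<q} \<times> words R q) \<subseteq> words (insert r R) q"
    using assms by (auto simp: words_def)
  show "(\<lambda>b. (b r, b(r := 0))) ` words (insert r R) q \<subseteq> {..<q} \<times> words R q"
    by (auto simp: words_def)
qed auto

lemma words_empty: "words {} q = {\<lambda>_. 0}"
  by (auto simp: words_def)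

lemma finite_words: "finite R \<Longrightarrow> finite (words R q)"
proof (induction R rule: finite_induct)
  case empty
  then show ?case by (simp add: words_empty)
next
  case (insert r R)
  then show ?case using bij_betw_finite words_insert by blast
qed

lemma sum_prod_words:
  fixes g :: "nat \<Rightarrow> nat \<Rightarrow> 'a::comm_semiring_1"
  assumes "finite R"
  shows "(\<Sum>b\<in>words R q. \<Prod>i\<in>R. g i (b i)) = (\<Prod>i\<in>R. \<Sum>c<q. g i c)"
  using assms
proof (induction R rule: finite_induct)
  case empty
  then show ?case by (simp add: words_empty)
next
  case (insert r R)
  have reindex: "(\<Sum>b\<in>words (insert r R) q. h b) = (\<Sum>(c, b)\<in>{..<q} \<times> words R q. h (b(r := c)))"
    for h :: "(nat \<Rightarrow> nat) \<Rightarrow> 'a"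
    using sum.reindex_bij_betw[OF words_insert[OF insert.hyps(2)], of h] by (simp add: case_prod_unfold)
  have "(\<Sum>b\<in>words (insert r R) q. \<Prod>i\<in>insert r R. g i (b i))
      = (\<Sum>(c, b)\<in>{..<q} \<times> words R q. \<Prod>i\<in>insert r R. g i ((b(r := c)) i))"
    by (rule reindex)
  also have "\<dots> = (\<Sum>(c, b)\<in>{..<q} \<times> words R q. g r c * (\<Prod>i\<in>R. g i (b i)))"
  proof -
    have "(\<Prod>i\<in>R. g i ((b(r := c)) i)) = (\<Prod>i\<in>R. g i (b i))" for b c
      using insert.hyps(2) by (intro prod.cong) auto
    then show ?thesis using insert.hyps by simp
  qed
  also have "\<dots> = (\<Sum>c<q. g r c) * (\<Sum>b\<in>words R q. \<Prod>i\<in>R. g i (b i))"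
    by (simp add: sum.cartesian_product[symmetric] sum_product)
  finally show ?case using insert by simp
qed

section \<open>Additive characters\<close>

definition unit_root :: "nat \<Rightarrow> complex" where
  "unit_root q = exp (2 * of_real pi * \<i> / of_nat q)"

lemma unit_root_power: "unit_root q ^ j = exp (2 * of_real pi * \<i> * of_nat j / of_nat q)"
  unfolding unit_root_def exp_of_nat_mult[symmetric] by (simp add: field_simps)

lemma unit_root_power_eq_iff: "q \<ge> 1 \<Longrightarrow> unit_root q ^ j = unit_root q ^ k \<longleftrightarrow> j mod q = k mod q"
  unfolding unit_root_power by (rule complex_root_unity_eq)

lemma unit_root_power_eq_1_iff: "q \<ge> 1 \<Longrightarrow> unit_root q ^ j = 1 \<longleftrightarrow> q dvd j"
  unfolding unit_root_power by (rule complex_root_unity_eq_1)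

lemma cnj_unit_root_power_mult: "cnj (unit_root q ^ j) * unit_root q ^ j = 1"
proof -
  have "norm (unit_root q ^ j) = 1"
    unfolding unit_root_power by (simp add: norm_exp_eq_Re)
  then show ?thesis
    by (metis complex_norm_square mult.commute of_real_1 power_one)
qed

lemma sum_unit_root_powers:
  assumes "q \<ge> 1"
  shows "(\<Sum>c<q. cnj (unit_root q ^ (c * u)) * unit_root q ^ (c * v))
       = (if u mod q = v mod q then of_nat q else 0)"
proof -
  define z where "z = cnj (unit_root q ^ u) * unit_root q ^ v"
  have powers: "cnj (unit_root q ^ (c * u)) * unit_root q ^ (c * v) = z ^ c" for c
    by (simp add: z_def power_mult_distrib power_mult mult.commute[of c])
  have "unit_root q ^ q = 1"
    using unit_root_power_eq_1_iff[OF assms, of q] by simp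
  moreover have "z ^ q = cnj ((unit_root q ^ q) ^ u) * (unit_root q ^ q) ^ v"
    by (simp add: z_def power_mult_distrib flip: power_mult) (simp add: mult.commute)
  ultimately have "z ^ q = 1"
    by simp
  moreover have "z = 1 \<longleftrightarrow> u mod q = v mod q"
  proof -
    have "z = 1 \<longleftrightarrow> unit_root q ^ u = unit_root q ^ v"
      using cnj_unit_root_power_mult[of q u] unfolding z_def
      by (metis mult.assoc mult.commute mult_1_left mult_1_right)
    then show ?thesis using unit_root_power_eq_iff[OF assms] by simp
  qed
  ultimately show ?thesis
    unfolding powers using sum_gp_strict[of z q] by auto
qed

definition character :: "nat set \<Rightarrow> nat \<Rightarrow> (nat \<Rightarrow> nat) \<Rightarrow> (nat \<Rightarrow> nat) \<Rightarrow> complex" where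
  "character R q b x = (\<Prod>i\<in>R. unit_root q ^ (b i * x i))"

lemma character_commute: "character R q b x = character R q x b"
  by (simp add: character_def mult.commute)

lemma character_zero: "character R q (\<lambda>_. 0) x = 1"
  by (simp add: character_def)

lemma character_mult_left: "character R q a y * character R q b y = character R q (\<lambda>i. a i + b i) y"
  by (simp add: character_def prod.distrib[symmetric] power_add[symmetric] algebra_simps)

lemma character_mult_right: "character R q b x * character R q b y = character R q b (\<lambda>i. x i + y i)"
  by (simp add: character_def prod.distrib[symmetric] power_add[symmetric] algebra_simps)

lemma character_eq_unit_root_power: "character R q a y = unit_root q ^ (\<Sum>i\<in>R. a i * y i)"
  by (simp add: character_def power_sum)

lemma character_superset:
  assumes "R \<subseteq> U" "finite U" "b \<in> words R q"
  shows "character U q b y = character R q b y"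
  unfolding character_def
  by (rule prod.mono_neutral_right[OF assms(2,1)]) (use assms(3) in \<open>auto simp: words_def\<close>)

lemma prod_if_const:
  assumes "finite R"
  shows "(\<Prod>i\<in>R. if P i then a else 0) = (if \<forall>i\<in>R. P i then a ^ card R else (0::'a::comm_semiring_1))"
proof (cases "\<forall>i\<in>R. P i")
  case False
  then obtain i where "i \<in> R" "\<not> P i" by blast
  then have "(\<Prod>i\<in>R. if P i then a else 0) = 0"
    using assms by (intro prod_zero) auto
  then show ?thesis using False by auto
qed simp

lemma sum_cnj_character_mult:
  assumes "finite R" "q \<ge> 1"
  shows "(\<Sum>b\<in>words R q. cnj (character R q b x) * character R q b z)
       = (if \<forall>i\<in>R. x i mod q = z i mod q then of_nat q ^ card R else 0)"
proof -
  have "(\<Sum>b\<in>words R q. cnj (character R q b x) * character R q b z)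
      = (\<Sum>b\<in>words R q. \<Prod>i\<in>R. cnj (unit_root q ^ (b i * x i)) * unit_root q ^ (b i * z i))"
    by (simp add: character_def prod.distrib del: complex_cnj_power)
  also have "\<dots> = (\<Prod>i\<in>R. \<Sum>c<q. cnj (unit_root q ^ (c * x i)) * unit_root q ^ (c * z i))"
    by (rule sum_prod_words[OF assms(1)])
  also have "\<dots> = (\<Prod>i\<in>R. if x i mod q = z i mod q then of_nat q else 0)"
    by (simp only: sum_unit_root_powers[OF assms(2)])
  finally show ?thesis
    by (simp only: prod_if_const[OF assms(1)])
qed

lemma words_eq_iff_mod:
  assumes "a \<in> words R q" "b \<in> words R q"
  shows "(\<forall>i\<in>R. a i mod q = b i mod q) \<longleftrightarrow> a = b"
  using assms by (auto simp: words_def intro: words_eqI[OF assms])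

lemma character_orthogonality:
  assumes "finite R" "q \<ge> 1" "a \<in> words R q" "b \<in> words R q"
  shows "(\<Sum>x\<in>words R q. cnj (character R q a x) * character R q b x)
       = (if a = b then of_nat q ^ card R else 0)"
  using sum_cnj_character_mult[OF assms(1,2), of a b] words_eq_iff_mod[OF assms(3,4)]
  by (simp add: character_commute[of R q _ a] character_commute[of R q _ b])

section \<open>Krawtchouk numbers as character sums\<close>

lemma coeff_linear_power_pCons_1: "coeff ([:1, a:] ^ m) k = of_nat (m choose k) * a ^ k"
proof (induction m arbitrary: k)
  case 0
  then show ?case by (cases k) auto
next
  case (Suc m)
  then show ?case
    by (cases k) (simp_all add: coeff_pCons algebra_simps)
qed

lemma sum_monom_unit_root_powers:
  assumes "q \<ge> 1" "u < q" "v < q"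
  shows "(\<Sum>c<q. monom (cnj (unit_root q ^ (c * u)) * unit_root q ^ (c * v)) (if c = 0 then 0 else 1))
       = [:1, if u = v then of_nat q - 1 else - 1:]"
proof -
  define f where "f c = cnj (unit_root q ^ (c * u)) * unit_root q ^ (c * v)" for c
  have split: "{..<q} = insert 0 {1..<q}" using assms(1) by auto
  have "(\<Sum>c<q. monom (f c) (if c = 0 then 0 else 1)) = monom (f 0) 0 + (\<Sum>c\<in>{1..<q}. monom (f c) 1)"
    unfolding split by (subst sum.insert) (auto intro!: sum.cong)
  also have "\<dots> = 1 + monom ((\<Sum>c<q. f c) - 1) 1"
    unfolding split by (simp add: f_def monom_sum monom_0 one_pCons)
  also have "(\<Sum>c<q. f c) = (if u = v then of_nat q else 0)"
    using sum_unit_root_powers[OF assms(1), of u v] assms unfolding f_def by simp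
  finally show ?thesis
    unfolding f_def by (simp add: poly_eq_iff coeff_pCons coeff_1 split: nat.splits)
qed

lemma prod_monom: "finite A \<Longrightarrow> (\<Prod>i\<in>A. monom (f i) (g i)) = monom (\<Prod>i\<in>A. f i) (\<Sum>i\<in>A. g i)"
  by (induction A rule: finite_induct) (simp_all add: mult_monom)

text \<open>The generating function, by the weight of \<open>b\<close>, of the products of two characters; its
  coefficients are Krawtchouk numbers.\<close>

lemma sum_monom_characters:
  assumes "finite R" "q \<ge> 1" "\<forall>i\<in>R. x i < q \<and> y i < q"
  shows "(\<Sum>b\<in>words R q. monom (cnj (character R q b x) * character R q b y) (weight R b))
       = [:1, - 1:] ^ dist_on R x y * [:1, of_nat q - 1:] ^ (card R - dist_on R x y)"
proof -
  define g where
    "g i c = monom (cnj (unit_root q ^ (c * x i)) * unit_root q ^ (c * y i)) (if c = 0 then 0 else 1)"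
    for i c
  have "monom (cnj (character R q b x) * character R q b y) (weight R b) = (\<Prod>i\<in>R. g i (b i))" for b
    using assms(1)
    by (simp add: g_def prod_monom character_def prod.distrib weight_def sum.If_cases Int_def
        del: complex_cnj_power)
  then have "(\<Sum>b\<in>words R q. monom (cnj (character R q b x) * character R q b y) (weight R b))
      = (\<Prod>i\<in>R. \<Sum>c<q. g i c)"
    using sum_prod_words[OF assms(1)] by simp
  also have "\<dots> = (\<Prod>i\<in>R. if x i = y i then [:1, of_nat q - 1:] else [:1, - 1:])"
    using sum_monom_unit_root_powers[OF assms(2)] assms(3) unfolding g_def by (intro prod.cong) auto
  also have "\<dots> = [:1, of_nat q - 1:] ^ card {i\<in>R. x i = y i} * [:1, - 1:] ^ dist_on R x y"
    using assms(1) by (simp add: prod.If_cases dist_on_def Int_def set_diff_eq)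
  also have "card {i\<in>R. x i = y i} = card R - dist_on R x y"
    using card_filter_complement[OF assms(1), of "\<lambda>i. x i = y i"] by (simp add: dist_on_def)
  finally show ?thesis by (simp add: mult.commute)
qed

lemma krawtchouk_character_sum:
  assumes "finite R" "q \<ge> 1" "\<forall>i\<in>R. x i < q \<and> y i < q"
  shows "(\<Sum>b\<in>{b\<in>words R q. weight R b = j}. cnj (character R q b x) * character R q b y)
       = of_real (krawtchouk (card R) q j (dist_on R x y))"
proof -
  let ?d = "dist_on R x y" and ?n = "card R"
  have "(\<Sum>b\<in>{b\<in>words R q. weight R b = j}. cnj (character R q b x) * character R q b y)
      = coeff (\<Sum>b\<in>words R q. monom (cnj (character R q b x) * character R q b y) (weight R b)) j"
    by (simp add: coeff_sum sum.inter_filter finite_words[OF assms(1)])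
  also have "\<dots> = coeff ([:1, - 1:] ^ ?d * [:1, of_nat q - 1:] ^ (?n - ?d)) j"
    by (simp only: sum_monom_characters[OF assms])
  also have "\<dots> = (\<Sum>h\<le>j. of_nat (?d choose h) * (- 1) ^ h * (of_nat ((?n - ?d) choose (j - h)) * (of_nat q - 1) ^ (j - h)))"
    by (simp add: coeff_mult coeff_linear_power_pCons_1)
  also have "\<dots> = of_real (krawtchouk ?n q j ?d)"
    by (simp add: krawtchouk_def of_real_sum algebra_simps)
  finally show ?thesis .
qed

lemma eq_add_mod_iff:
  fixes e x y q :: nat
  assumes "e < q" "x < q" "y < q"
  shows "x = (e + y) mod q \<longleftrightarrow> e = (x + q - y) mod q"
  using assms by (cases "e + y < q"; cases "y \<le> x") (auto simp: le_mod_geq)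

definition word_diff :: "nat set \<Rightarrow> nat \<Rightarrow> (nat \<Rightarrow> nat) \<Rightarrow> (nat \<Rightarrow> nat) \<Rightarrow> nat \<Rightarrow> nat" where
  "word_diff R q x y k = (if k \<in> R then (x k + q - y k) mod q else 0)"

lemma word_diff_in_words: "q \<ge> 1 \<Longrightarrow> word_diff R q x y \<in> words R q"
  by (auto simp: words_def word_diff_def)

lemma weight_word_diff:
  assumes "q \<ge> 1" "\<forall>i\<in>R. x i < q \<and> y i < q"
  shows "weight R (word_diff R q x y) = dist_on R x y"
proof -
  have "word_diff R q x y k = 0 \<longleftrightarrow> x k = y k" if "k \<in> R" for k
    using eq_add_mod_iff[of 0 q "x k" "y k"] assms that by (auto simp: word_diff_def)
  then show ?thesis
    unfolding weight_def dist_on_def by (metis (lifting))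
qed

lemma eq_add_mod_iff_word_diff:
  assumes "q \<ge> 1" "e \<in> words R q" "\<forall>i\<in>R. x i < q \<and> y i < q"
  shows "(\<forall>k\<in>R. x k mod q = (e k + y k) mod q) \<longleftrightarrow> e = word_diff R q x y"
proof -
  have "x k mod q = (e k + y k) mod q \<longleftrightarrow> e k = word_diff R q x y k" if "k \<in> R" for k
    using eq_add_mod_iff[of "e k" q "x k" "y k"] assms(2,3) that by (simp add: words_def word_diff_def)
  then have "(\<forall>k\<in>R. x k mod q = (e k + y k) mod q) \<longleftrightarrow> (\<forall>k\<in>R. e k = word_diff R q x y k)"
    by auto
  also have "\<dots> \<longleftrightarrow> e = word_diff R q x y"
    using words_eqI[OF assms(2) word_diff_in_words[OF assms(1)]] by auto
  finally show ?thesis .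
qed

lemma sum_krawtchouk_characters:
  assumes "finite R" "q \<ge> 1" "\<forall>i\<in>R. x i < q \<and> y i < q"
  shows "(\<Sum>b\<in>words R q. of_real (krawtchouk (card R) q j (weight R b))
            * (cnj (character R q b x) * character R q b y))
       = (if dist_on R x y = j then of_nat q ^ card R else 0)"
proof -
  let ?W = "words R q" and ?\<chi> = "character R q"
  have krawtchouk: "of_real (krawtchouk (card R) q j (weight R b)) = (\<Sum>e\<in>{e\<in>?W. weight R e = j}. ?\<chi> e b)"
    if "b \<in> ?W" for b
    using krawtchouk_character_sum[OF assms(1,2), of "\<lambda>_. 0" b j] that assms(2)
    by (simp add: words_def dist_on_zero_left character_commute[of R q _ "\<lambda>_. 0"] character_zero)
  have "(\<Sum>b\<in>?W. of_real (krawtchouk (card R) q j (weight R b)) * (cnj (?\<chi> b x) * ?\<chi> b y))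
      = (\<Sum>b\<in>?W. \<Sum>e\<in>{e\<in>?W. weight R e = j}. cnj (?\<chi> b x) * ?\<chi> b (\<lambda>k. e k + y k))"
  proof (intro sum.cong refl)
    fix b assume "b \<in> ?W"
    have shift: "?\<chi> e b * ?\<chi> b y = ?\<chi> b (\<lambda>k. e k + y k)" for e
      by (simp add: character_commute[of R q e b] character_mult_right)
    show "of_real (krawtchouk (card R) q j (weight R b)) * (cnj (?\<chi> b x) * ?\<chi> b y)
        = (\<Sum>e\<in>{e\<in>?W. weight R e = j}. cnj (?\<chi> b x) * ?\<chi> b (\<lambda>k. e k + y k))"
      unfolding krawtchouk[OF \<open>b \<in> ?W\<close>] sum_distrib_right
      by (intro sum.cong refl) (simp add: shift[symmetric] ac_simps)
  qed
  also have "\<dots> = (\<Sum>e\<in>{e\<in>?W. weight R e = j}. if e = word_diff R q x y then of_nat q ^ card R else 0)"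
    by (subst sum.swap) (simp add: sum_cnj_character_mult[OF assms(1,2)] eq_add_mod_iff_word_diff[OF assms(2) _ assms(3)])
  also have "\<dots> = (if dist_on R x y = j then of_nat q ^ card R else 0)"
    using word_diff_in_words[OF assms(2)] weight_word_diff[OF assms(2,3)] finite_words[OF assms(1)] by auto
  finally show ?thesis .
qed

section \<open>Krawtchouk polynomials\<close>

definition binomial_poly :: "real poly \<Rightarrow> nat \<Rightarrow> real poly" where
  "binomial_poly p h = smult (1 / fact h) (\<Prod>k<h. p + [:- of_nat k:])"

lemma poly_binomial_poly: "poly (binomial_poly p h) x = poly p x gchoose h"
  by (simp add: binomial_poly_def poly_prod gbinomial_prod_rev atLeast0LessThan divide_inverse mult.commute)

lemma
  assumes "degree p = 1"
  shows degree_binomial_poly: "degree (binomial_poly p h) = h"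
    and lead_coeff_binomial_poly: "lead_coeff (binomial_poly p h) = lead_coeff p ^ h / fact h"
proof -
  have factor: "degree (p + [:- of_nat k:]) = 1" "lead_coeff (p + [:- of_nat k:]) = lead_coeff p" for k
    using assms by (simp_all add: degree_add_eq_left)
  then have "p + [:- of_nat k:] \<noteq> 0" for k
    by (metis one_neq_zero degree_0)
  then show "degree (binomial_poly p h) = h"
    by (simp add: binomial_poly_def degree_prod_eq_sum_degree factor)
  show "lead_coeff (binomial_poly p h) = lead_coeff p ^ h / fact h"
    using assms by (simp add: binomial_poly_def lead_coeff_smult lead_coeff_prod factor)
qed

definition krawtchouk_poly :: "nat \<Rightarrow> nat \<Rightarrow> nat \<Rightarrow> real poly" where
  "krawtchouk_poly n q i = (\<Sum>h\<le>i. smult ((-1) ^ h * (real q - 1) ^ (i - h))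
      (binomial_poly [:0, 1:] h * binomial_poly [:of_nat n, -1:] (i - h)))"

lemma poly_krawtchouk_poly:
  assumes "j \<le> n"
  shows "poly (krawtchouk_poly n q i) (of_nat j) = krawtchouk n q i j"
  unfolding krawtchouk_poly_def krawtchouk_def poly_sum
  using assms by (intro sum.cong refl) (simp add: poly_binomial_poly binomial_gbinomial of_nat_diff)

lemma
  shows degree_krawtchouk_poly: "degree (krawtchouk_poly n q i) \<le> i"
    and coeff_krawtchouk_poly: "coeff (krawtchouk_poly n q i) i = (- real q) ^ i / fact i"
proof -
  define t where "t h = binomial_poly [:0, 1:] h * binomial_poly [:of_nat n, -1:] (i - h)" for h
  have t: "degree (t h) = i" "coeff (t h) i = (-1) ^ (i - h) / (fact h * fact (i - h))" if "h \<le> i" for h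
  proof -
    have "binomial_poly [:0, 1:] h \<noteq> 0" "binomial_poly [:of_nat n, -1:] (i - h) \<noteq> 0"
      using lead_coeff_binomial_poly[of "[:0, 1:]" h] lead_coeff_binomial_poly[of "[:of_nat n, -1:]" "i - h"]
      by auto
    then show "degree (t h) = i"
      using that by (simp add: t_def degree_mult_eq degree_binomial_poly)
    then have "coeff (t h) i = lead_coeff (t h)" by simp
    also have "\<dots> = 1 / fact h * ((-1) ^ (i - h) / fact (i - h))"
      unfolding t_def lead_coeff_mult by (simp add: lead_coeff_binomial_poly)
    finally show "coeff (t h) i = (-1) ^ (i - h) / (fact h * fact (i - h))" by simp
  qed
  show "degree (krawtchouk_poly n q i) \<le> i"
    unfolding krawtchouk_poly_def t_def[symmetric]
    by (intro degree_sum_le order.trans[OF degree_smult_le]) (simp_all add: t)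
  have "coeff (krawtchouk_poly n q i) i
      = (\<Sum>h\<le>i. (-1) ^ i / fact i * (of_nat (i choose h) * 1 ^ h * (real q - 1) ^ (i - h)))"
    unfolding krawtchouk_poly_def t_def[symmetric] coeff_sum
  proof (intro sum.cong refl)
    fix h assume "h \<in> {..i}"
    then have "h \<le> i" by simp
    then have "(-1::real) ^ h * (-1) ^ (i - h) = (-1) ^ i"
      by (simp flip: power_add)
    then show "coeff (smult ((-1) ^ h * (real q - 1) ^ (i - h)) (t h)) i
        = (-1) ^ i / fact i * (of_nat (i choose h) * 1 ^ h * (real q - 1) ^ (i - h))"
      using \<open>h \<le> i\<close> by (simp add: t binomial_fact field_simps)
  qed
  also have "\<dots> = (-1) ^ i / fact i * (\<Sum>h\<le>i. of_nat (i choose h) * 1 ^ h * (real q - 1) ^ (i - h))"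
    by (rule sum_distrib_left[symmetric])
  also have "\<dots> = (- real q) ^ i / fact i"
    using binomial_ring[of 1 "real q - 1" i] by (simp add: power_minus')
  finally show "coeff (krawtchouk_poly n q i) i = (- real q) ^ i / fact i" .
qed

lemma triangular_basis_spans:
  fixes B :: "nat \<Rightarrow> 'a::field poly"
  assumes "\<And>i. degree (B i) \<le> i" "\<And>i. coeff (B i) i \<noteq> 0"
  shows "degree p \<le> e \<Longrightarrow> \<exists>c. p = (\<Sum>i\<le>e. smult (c i) (B i))"
proof (induction e arbitrary: p)
  case 0
  have "p = [:coeff p 0:]" "B 0 = [:coeff (B 0) 0:]"
    using 0 assms(1)[of 0] by (metis degree_0_id le_zero_eq)+
  then have "p = smult (coeff p 0 / coeff (B 0) 0) (B 0)"
    using assms(2)[of 0] by (metis smult_pCons smult_0_right nonzero_divide_eq_eq)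
  then show ?case by auto
next
  case (Suc e)
  define \<alpha> where "\<alpha> = coeff p (Suc e) / coeff (B (Suc e)) (Suc e)"
  have "degree (p - smult \<alpha> (B (Suc e))) \<le> Suc e"
    using Suc.prems assms(1) by (intro degree_diff_le) (auto intro: order.trans[OF degree_smult_le])
  moreover have "coeff (p - smult \<alpha> (B (Suc e))) (Suc e) = 0"
    using assms(2) by (simp add: \<alpha>_def)
  ultimately have "degree (p - smult \<alpha> (B (Suc e))) \<le> e"
    by (metis eq_zero_or_degree_less degree_0 le_SucE less_Suc_eq_le zero_le)
  then obtain c where "p - smult \<alpha> (B (Suc e)) = (\<Sum>i\<le>e. smult (c i) (B i))"
    using Suc.IH by blast
  then have "p = (\<Sum>i\<le>Suc e. smult ((c(Suc e := \<alpha>)) i) (B i))"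
    by (simp add: algebra_simps)
  then show ?case by blast
qed

lemma krawtchouk_poly_basis:
  assumes "q \<ge> 1" "degree P \<le> e"
  shows "\<exists>c. P = (\<Sum>i\<le>e. smult (c i) (krawtchouk_poly n q i))"
  using triangular_basis_spans[of "krawtchouk_poly n q"] degree_krawtchouk_poly assms
  by (simp add: coeff_krawtchouk_poly)

section \<open>The dual support in terms of character sums\<close>

text \<open>Up to normalisation, \<open>character_sum R q Y\<close> is the Fourier transform of the characteristic
  vector \<open>\<chi>\<^sub>Y\<close>.\<close>

definition character_sum :: "nat set \<Rightarrow> nat \<Rightarrow> (nat \<Rightarrow> nat) set \<Rightarrow> (nat \<Rightarrow> nat) \<Rightarrow> complex" where
  "character_sum R q Y b = (\<Sum>y\<in>Y. character R q b y)"

lemma dual_support_subset: "dual_support D q Y \<subseteq> {1..D}"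
  by (auto simp: dual_support_def)

lemma finite_dual_support: "finite (dual_support D q Y)"
  using finite_subset[OF dual_support_subset] by blast

lemma dual_dist_in_dual_support: "dual_support D q Y \<noteq> {} \<Longrightarrow> dual_dist D q Y \<in> dual_support D q Y"
  unfolding dual_dist_def by (rule Min_in[OF finite_dual_support])

lemma dual_dist_le: "\<tau> \<in> dual_support D q Y \<Longrightarrow> dual_dist D q Y \<le> \<tau>"
  unfolding dual_dist_def by (rule Min_le[OF finite_dual_support])

lemma dual_degree_pos: "dual_support D q Y \<noteq> {} \<Longrightarrow> 0 < dual_degree D q Y"
  unfolding dual_degree_def using finite_dual_support by (simp add: card_gt_0_iff)

lemma Echi_eq_sum_character_sum:
  assumes "q \<ge> 1" "Y \<subseteq> words {..<D} q" "finite Y" "u \<in> words {..<D} q"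
  shows "of_real (Echi D q Y j u) * of_nat q ^ D
       = (\<Sum>b\<in>{b\<in>words {..<D} q. weight {..<D} b = j}.
            cnj (character {..<D} q b u) * character_sum {..<D} q Y b)"
proof -
  let ?W = "{b\<in>words {..<D} q. weight {..<D} b = j}"
  have idem: "prim_idem D q j u y * real q ^ D = krawtchouk D q j (hdist D u y)" for y
  proof -
    have "(\<Sum>i\<le>D. krawtchouk D q j i * assoc_mat D i u y)
        = (\<Sum>i\<le>D. if hdist D u y = i then krawtchouk D q j i else 0)"
      by (intro sum.cong refl) (simp add: assoc_mat_def)
    also have "\<dots> = krawtchouk D q j (hdist D u y)"
      using dist_on_le_card[of "{..<D}" u y] by (simp add: hdist_eq_dist_on)
    finally show ?thesis using assms(1) by (simp add: prim_idem_def)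
  qed
  have "Echi D q Y j u * real q ^ D = (\<Sum>y\<in>Y. krawtchouk D q j (dist_on {..<D} u y))"
    unfolding Echi_def sum_distrib_right idem hdist_eq_dist_on ..
  then have "of_real (Echi D q Y j u) * of_nat q ^ D
      = (\<Sum>y\<in>Y. complex_of_real (krawtchouk D q j (dist_on {..<D} u y)))"
    by (metis of_real_mult of_real_of_nat_eq of_real_power of_real_sum)
  also have "\<dots> = (\<Sum>y\<in>Y. \<Sum>b\<in>?W. cnj (character {..<D} q b u) * character {..<D} q b y)"
  proof (intro sum.cong refl)
    fix y assume "y \<in> Y"
    then have "\<forall>i\<in>{..<D}. u i < q \<and> y i < q" using assms(2,4) by (auto simp: words_def)
    then show "complex_of_real (krawtchouk D q j (dist_on {..<D} u y))
        = (\<Sum>b\<in>?W. cnj (character {..<D} q b u) * character {..<D} q b y)"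
      using krawtchouk_character_sum[OF _ assms(1), of "{..<D}" u y j] by simp
  qed
  also have "\<dots> = (\<Sum>b\<in>?W. cnj (character {..<D} q b u) * character_sum {..<D} q Y b)"
    by (subst sum.swap) (simp add: character_sum_def sum_distrib_left)
  finally show ?thesis .
qed

lemma character_inversion:
  assumes "finite R" "q \<ge> 1" "B \<subseteq> words R q" "b0 \<in> B"
  shows "(\<Sum>u\<in>words R q. character R q b0 u * (\<Sum>b\<in>B. cnj (character R q b u) * f b))
       = of_nat q ^ card R * f b0"
proof -
  have fin: "finite B" using assms(1,3) finite_subset finite_words by blast
  have "(\<Sum>u\<in>words R q. character R q b0 u * (\<Sum>b\<in>B. cnj (character R q b u) * f b))
      = (\<Sum>b\<in>B. f b * (\<Sum>u\<in>words R q. cnj (character R q b u) * character R q b0 u))"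
    unfolding sum_distrib_left by (subst sum.swap) (simp add: ac_simps)
  also have "\<dots> = (\<Sum>b\<in>B. if b = b0 then f b0 * of_nat q ^ card R else 0)"
  proof (intro sum.cong refl)
    fix b assume "b \<in> B"
    then have "b \<in> words R q" "b0 \<in> words R q" using assms(3,4) by auto
    then show "f b * (\<Sum>u\<in>words R q. cnj (character R q b u) * character R q b0 u)
        = (if b = b0 then f b0 * of_nat q ^ card R else 0)"
      by (simp add: character_orthogonality[OF assms(1,2)])
  qed
  finally show ?thesis using assms(4) fin by simp
qed

lemma dual_support_iff:
  assumes "q \<ge> 1" "Y \<subseteq> hamming_space D q" "finite Y"
  shows "j \<in> dual_support D q Y \<longleftrightarrow> j \<in> {1..D} \<and>
    (\<exists>b\<in>words {..<D} q. weight {..<D} b = j \<and> character_sum {..<D} q Y b \<noteq> 0)"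
proof -
  let ?W = "words {..<D} q" and ?F = "character_sum {..<D} q Y"
  let ?B = "{b\<in>?W. weight {..<D} b = j}"
  define S where "S u = (\<Sum>b\<in>?B. cnj (character {..<D} q b u) * ?F b)" for u
  have "Echi D q Y j u \<noteq> 0 \<longleftrightarrow> S u \<noteq> 0" if "u \<in> ?W" for u
  proof -
    have "of_real (Echi D q Y j u) * of_nat q ^ D = S u"
      using Echi_eq_sum_character_sum[OF assms(1) _ assms(3) that] assms(2)
      by (simp add: S_def hamming_space_eq_words)
    then show ?thesis using assms(1) by auto
  qed
  then have "j \<in> dual_support D q Y \<longleftrightarrow> j \<in> {1..D} \<and> (\<exists>u\<in>?W. S u \<noteq> 0)"
    by (auto simp: dual_support_def hamming_space_eq_words)
  moreover have "(\<exists>u\<in>?W. S u \<noteq> 0) \<longleftrightarrow> (\<exists>b\<in>?B. ?F b \<noteq> 0)"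
  proof
    assume "\<exists>u\<in>?W. S u \<noteq> 0"
    then show "\<exists>b\<in>?B. ?F b \<noteq> 0"
      unfolding S_def by (metis (no_types, lifting) mult_zero_right sum.neutral)
  next
    assume "\<exists>b\<in>?B. ?F b \<noteq> 0"
    then obtain b0 where "b0 \<in> ?B" "?F b0 \<noteq> 0" by blast
    then have "(\<Sum>u\<in>?W. character {..<D} q b0 u * S u) \<noteq> 0"
      unfolding S_def using character_inversion[of "{..<D}" q ?B b0 ?F] assms(1) by simp
    then show "\<exists>u\<in>?W. S u \<noteq> 0"
      by (metis (no_types, lifting) mult_zero_right sum.neutral)
  qed
  ultimately show ?thesis by auto
qed

text \<open>If all nontrivial character sums vanished, Fourier inversion at a codeword would give
  \<open>|Y| = q\<^sup>D\<close>.\<close>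

lemma dual_support_nonempty:
  assumes "q \<ge> 1" "Y \<subseteq> hamming_space D q" "finite Y" "y1 \<in> Y" "card Y < q ^ D"
  shows "dual_support D q Y \<noteq> {}"
proof
  assume empty: "dual_support D q Y = {}"
  let ?W = "words {..<D} q" and ?\<chi> = "character {..<D} q" and ?F = "character_sum {..<D} q Y"
  have YW: "Y \<subseteq> ?W" using assms(2) by (simp add: hamming_space_eq_words)
  have zero: "(\<lambda>_. 0) \<in> ?W" using assms(1) by (simp add: zero_in_words)
  have "?F b = 0" if "b \<in> ?W" "b \<noteq> (\<lambda>_. 0)" for b
    using dual_support_iff[OF assms(1-3), of "weight {..<D} b"] empty that
      weight_pos[OF that(1) _ that(2)] weight_le_card[of "{..<D}" b] by auto
  then have "(\<Sum>b\<in>?W. cnj (?\<chi> b y1) * ?F b) = (\<Sum>b\<in>?W. if b = (\<lambda>_. 0) then of_nat (card Y) else 0)"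
    by (intro sum.cong refl) (auto simp: character_sum_def character_zero)
  also have "\<dots> = of_nat (card Y)"
    using zero finite_words[of "{..<D}" q] by simp
  finally have "(\<Sum>b\<in>?W. cnj (?\<chi> b y1) * ?F b) = of_nat (card Y)" .
  moreover have "(\<Sum>b\<in>?W. cnj (?\<chi> b y1) * ?\<chi> b y) = (if y = y1 then of_nat q ^ D else 0)"
    if "y \<in> Y" for y
    using sum_cnj_character_mult[OF _ assms(1), of "{..<D}" y1 y] words_eq_iff_mod[of y1 "{..<D}" q y]
      YW assms(4) that by auto
  then have "(\<Sum>b\<in>?W. cnj (?\<chi> b y1) * ?F b) = (\<Sum>y\<in>Y. if y = y1 then of_nat q ^ D else 0)"
    unfolding character_sum_def sum_distrib_left by (subst sum.swap) simp
  ultimately have "of_nat (card Y) = (of_nat (q ^ D) :: complex)"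
    using assms(3,4) by simp
  then show False using assms(5) by (simp only: of_nat_eq_iff)
qed

lemma min_dist_le_hdist:
  assumes "Y \<subseteq> hamming_space D q" "finite Y" "y \<in> Y" "y' \<in> Y" "y \<noteq> y'"
  shows "min_dist D Y \<le> hdist D y y'"
proof -
  let ?d = "hdist D y y'"
  have "y \<in> words {..<D} q" "y' \<in> words {..<D} q"
    using assms(1,3,4) by (auto simp: hamming_space_eq_words)
  then obtain k where "k < D" "y k \<noteq> y' k"
    using assms(5) by (auto elim: words_neq_imp_coord_neq)
  then have "?d \<noteq> 0" by (auto simp: hdist_def)
  moreover have "?d \<le> D"
    using dist_on_le_card[of "{..<D}" y y'] by (simp add: hdist_eq_dist_on)
  moreover have "quad_A D Y ?d \<noteq> 0"
  proof -
    have "1 \<le> (\<Sum>z\<in>Y. assoc_mat D ?d y z)"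
      using assms(2,4) by (intro member_le_sum[of y', THEN order.trans[rotated]]) (auto simp: assoc_mat_def)
    also have "\<dots> \<le> quad_A D Y ?d"
      unfolding quad_A_def using assms(2,3)
      by (intro member_le_sum[of y] sum_nonneg) (auto simp: assoc_mat_def)
    finally show ?thesis by simp
  qed
  ultimately show ?thesis
    unfolding min_dist_def by (intro Min_le) auto
qed

section \<open>An annihilator of the dual support\<close>

lemma sum_poly_krawtchouk_characters:
  assumes "finite R" "q \<ge> 1" "\<forall>i\<in>R. x i < q \<and> y i < q"
    and "P = (\<Sum>i\<le>e. smult (c i) (krawtchouk_poly (card R) q i))"
  shows "(\<Sum>b\<in>words R q. of_real (poly P (weight R b)) * (cnj (character R q b x) * character R q b y))
       = of_nat q ^ card R * of_real (if dist_on R x y \<le> e then c (dist_on R x y) else 0)"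
proof -
  let ?\<chi> = "character R q"
  have "poly P (weight R b) = (\<Sum>i\<le>e. c i * krawtchouk (card R) q i (weight R b))" for b
    using assms(1,4) weight_le_card by (simp add: poly_sum poly_krawtchouk_poly)
  then have "(\<Sum>b\<in>words R q. of_real (poly P (weight R b)) * (cnj (?\<chi> b x) * ?\<chi> b y))
      = (\<Sum>b\<in>words R q. \<Sum>i\<le>e. of_real (c i) *
           (of_real (krawtchouk (card R) q i (weight R b)) * (cnj (?\<chi> b x) * ?\<chi> b y)))"
    by (simp add: of_real_sum sum_distrib_right mult.assoc)
  also have "\<dots> = (\<Sum>i\<le>e. of_real (c i) * (\<Sum>b\<in>words R q.
           of_real (krawtchouk (card R) q i (weight R b)) * (cnj (?\<chi> b x) * ?\<chi> b y)))"
    by (subst sum.swap) (simp add: sum_distrib_left)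
  also have "\<dots> = (\<Sum>i\<le>e. of_real (c i) * (if dist_on R x y = i then of_nat q ^ card R else 0))"
    by (simp add: sum_krawtchouk_characters[OF assms(1-3)])
  finally show ?thesis
    by (simp add: if_distrib[of "(*) _"] sum.delta' cong: if_cong)
qed

lemma sum_character_mult_sum:
  assumes "finite U" "finite Y" "a \<in> words U q" "R = {i\<in>U. a i = 0}"
  shows "(\<Sum>y\<in>Y. character U q a y * (\<Sum>b\<in>words R q. f b * character R q b y))
       = (\<Sum>b\<in>words R q. f b * character_sum U q Y (\<lambda>i. a i + b i))"
proof -
  have "character U q a y * character R q b y = character U q (\<lambda>i. a i + b i) y"
    if "b \<in> words R q" for b y
  proof -
    have "character R q b y = character U q b y"
      using character_superset[of R U b q y] that assms(1,4) by auto
    then show ?thesis by (simp add: character_mult_left)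
  qed
  then show ?thesis
    unfolding character_sum_def sum_distrib_left
    by (subst sum.swap) (auto intro!: sum.cong simp: ac_simps)
qed

text \<open>Both sides are evaluations of \<open>\<Sum>y\<in>Y. \<chi>\<^sub>a(y) G(y)\<close> with
  \<open>G(y) = \<Sum>\<^sub>b P(wt b) cnj(\<chi>\<^sub>b(y0)) \<chi>\<^sub>b(y)\<close>, the sum over the words \<open>b\<close> supported
  on the zero set \<open>R\<close> of \<open>a\<close>: Krawtchouk inversion and the distance hypothesis kill every
  \<open>y \<noteq> y0\<close>, and the vanishing hypothesis kills every \<open>b \<noteq> 0\<close>.\<close>

lemma character_sum_eq_by_annihilator:
  assumes U: "finite U" and q: "q \<ge> 1" and Y: "Y \<subseteq> words U q" "finite Y" "y0 \<in> Y"
    and a: "a \<in> words U q" and R: "R = {i\<in>U. a i = 0}"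
    and P: "P = (\<Sum>i\<le>e. smult (c i) (krawtchouk_poly (card R) q i))"
    and far: "\<And>y. y \<in> Y \<Longrightarrow> y \<noteq> y0 \<Longrightarrow> weight U a + e < dist_on U y0 y"
    and vanish: "\<And>b. b \<in> words R q \<Longrightarrow> b \<noteq> (\<lambda>_. 0) \<Longrightarrow>
                  poly P (weight R b) = 0 \<or> character_sum U q Y (\<lambda>i. a i + b i) = 0"
  shows "of_real (c 0) * of_nat q ^ card R * character U q a y0 = of_real (poly P 0) * character_sum U q Y a"
proof -
  let ?\<chi> = "character R q"
  define G where "G y = (\<Sum>b\<in>words R q. of_real (poly P (weight R b)) * cnj (?\<chi> b y0) * ?\<chi> b y)" for y
  have finR: "finite R" using U R by simp
  have G: "G y = (if y = y0 then of_nat q ^ card R * of_real (c 0) else 0)" if "y \<in> Y" for y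
  proof -
    have "\<forall>i\<in>R. y0 i < q \<and> y i < q" using Y that R by (auto simp: words_def)
    then have "G y = of_nat q ^ card R * of_real (if dist_on R y0 y \<le> e then c (dist_on R y0 y) else 0)"
      unfolding G_def mult.assoc by (rule sum_poly_krawtchouk_characters[OF finR q _ P])
    moreover have "e < dist_on R y0 y" if "y \<noteq> y0"
    proof -
      have "U - R = {i\<in>U. a i \<noteq> 0}" using R by auto
      then show ?thesis
        using far[OF \<open>y \<in> Y\<close> that] dist_on_le_add_card_diff[OF U, of R y0 y] R
        by (auto simp: weight_def)
    qed
    ultimately show ?thesis by (auto simp: dist_on_def)
  qed
  have "(\<Sum>y\<in>Y. character U q a y * G y) = (\<Sum>b\<in>words R q.
          of_real (poly P (weight R b)) * cnj (?\<chi> b y0) * character_sum U q Y (\<lambda>i. a i + b i))"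
    unfolding G_def by (rule sum_character_mult_sum[OF U Y(2) a R])
  also have "\<dots> = (\<Sum>b\<in>words R q. if b = (\<lambda>_. 0) then of_real (poly P 0) * character_sum U q Y a else 0)"
    using vanish by (intro sum.cong refl) (auto simp: character_zero weight_def)
  also have "\<dots> = of_real (poly P 0) * character_sum U q Y a"
    using zero_in_words[of q R] q finite_words[OF finR] by simp
  finally show ?thesis
    using G Y(2,3) by (simp add: if_distrib[of "(*) _"] sum.delta' ac_simps cong: if_cong)
qed

lemma obtain_poly_vanishing_on:
  assumes "finite W" "0 \<notin> W"
  obtains P :: "real poly"
  where "degree P \<le> card W" "poly P 0 \<noteq> 0" "\<And>w. w \<in> W \<Longrightarrow> poly P (of_nat w) = 0"
proof
  let ?P = "\<Prod>w\<in>W. [:- of_nat w, 1:] :: real poly"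
  show "degree ?P \<le> card W"
    using degree_prod_sum_le[OF assms(1), of "\<lambda>w. [:- of_nat w, 1:]"] by simp
  show "poly ?P 0 \<noteq> 0" "\<And>w. w \<in> W \<Longrightarrow> poly ?P (of_nat w) = 0"
    using assms by (auto simp: poly_prod)
qed

lemma dual_support_annihilator:
  assumes "dual_support D q Y \<noteq> {}"
  obtains P :: "real poly"
  where "degree P \<le> dual_degree D q Y - 1" "poly P 0 \<noteq> 0"
    "\<And>\<tau>. \<tau> \<in> dual_support D q Y \<Longrightarrow> dual_dist D q Y < \<tau> \<Longrightarrow> poly P (of_nat (\<tau> - dual_dist D q Y)) = 0"
proof -
  let ?T = "dual_support D q Y" and ?m = "dual_dist D q Y"
  define W where "W = (\<lambda>\<tau>. \<tau> - ?m) ` (?T - {?m})"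
  have "finite W" unfolding W_def using finite_dual_support by simp
  moreover have "0 \<notin> W"
  proof
    assume "0 \<in> W"
    then obtain \<tau> where \<tau>: "\<tau> \<in> ?T - {?m}" and "0 = \<tau> - ?m" unfolding W_def by (rule imageE)
    then have "\<tau> \<le> ?m" by simp
    with \<tau> dual_dist_le[of \<tau> D q Y] show False by simp
  qed
  ultimately obtain P :: "real poly"
    where P: "degree P \<le> card W" "poly P 0 \<noteq> 0" "\<And>w. w \<in> W \<Longrightarrow> poly P (of_nat w) = 0"
    using obtain_poly_vanishing_on by blast
  note P(1)
  also have "card W \<le> card (?T - {?m})"
    unfolding W_def using finite_dual_support by (intro card_image_le) simp
  also have "\<dots> = dual_degree D q Y - 1"
    using finite_dual_support dual_dist_in_dual_support[OF assms] by (simp add: dual_degree_def)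
  finally show thesis
    using P(2,3) by (rule that) (auto simp: W_def)
qed

lemma character_sum_add_vanishes:
  assumes "q \<ge> 1" "Y \<subseteq> hamming_space D q" "finite Y"
    and a: "a \<in> words {..<D} q" and b: "b \<in> words {i\<in>{..<D}. a i = 0} q" "b \<noteq> (\<lambda>_. 0)"
    and "weight {..<D} a + weight {i\<in>{..<D}. a i = 0} b \<notin> dual_support D q Y"
  shows "character_sum {..<D} q Y (\<lambda>i. a i + b i) = 0"
proof -
  have "0 < weight {i\<in>{..<D}. a i = 0} b" using weight_pos[OF b(1) _ b(2)] by simp
  then show ?thesis
    using assms dual_support_iff[OF assms(1-3)] words_add_disjoint[OF _ a b(1)] weight_add_disjoint[OF _ a b(1)]
      weight_le_card[of "{..<D}" "\<lambda>i. a i + b i"] by auto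
qed

lemma character_sum_proportional:
  assumes q: "q \<ge> 1" and Y: "Y \<subseteq> hamming_space D q" "finite Y" and T: "dual_support D q Y \<noteq> {}"
    and far: "\<And>y y'. y \<in> Y \<Longrightarrow> y' \<in> Y \<Longrightarrow> y \<noteq> y' \<Longrightarrow>
               dual_dist D q Y + dual_degree D q Y - 1 < hdist D y y'"
  obtains \<kappa> where "\<And>a y. a \<in> words {..<D} q \<Longrightarrow> weight {..<D} a = dual_dist D q Y \<Longrightarrow> y \<in> Y \<Longrightarrow>
    \<kappa> * character {..<D} q a y = character_sum {..<D} q Y a"
proof -
  define m where "m = dual_dist D q Y"
  define s where "s = dual_degree D q Y"
  let ?U = "{..<D}" and ?T = "dual_support D q Y"
  obtain P :: "real poly" where P: "degree P \<le> s - 1" "poly P 0 \<noteq> 0"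
    "\<And>\<tau>. \<tau> \<in> ?T \<Longrightarrow> m < \<tau> \<Longrightarrow> poly P (of_nat (\<tau> - m)) = 0"
    using dual_support_annihilator[OF T] unfolding m_def s_def by blast
  obtain c where c: "P = (\<Sum>i\<le>s - 1. smult (c i) (krawtchouk_poly (D - m) q i))"
    using krawtchouk_poly_basis[OF q P(1)] by blast
  have "of_real (c 0) * of_nat q ^ (D - m) * character ?U q a y
      = of_real (poly P 0) * character_sum ?U q Y a"
    if a: "a \<in> words ?U q" "weight ?U a = m" and y: "y \<in> Y" for a y
  proof -
    let ?R = "{i\<in>?U. a i = 0}"
    have R: "card ?R = D - m"
      using card_filter_complement[of ?U "\<lambda>i. a i = 0"] a(2) by (simp add: weight_def)
    have "poly P (weight ?R b) = 0 \<or> character_sum ?U q Y (\<lambda>i. a i + b i) = 0"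
      if b: "b \<in> words ?R q" "b \<noteq> (\<lambda>_. 0)" for b
    proof (cases "m + weight ?R b \<in> ?T")
      case True
      then show ?thesis using P(3)[of "m + weight ?R b"] weight_pos[OF b(1) _ b(2)] by simp
    next
      case False
      then show ?thesis using character_sum_add_vanishes[OF q Y a(1) b] a(2) by simp
    qed
    moreover have "weight ?U a + (s - 1) < dist_on ?U y y'" if "y' \<in> Y" "y' \<noteq> y" for y'
      using far[OF y that(1) that(2)[symmetric]] a(2) dual_degree_pos[OF T]
      by (simp add: m_def s_def hdist_eq_dist_on)
    ultimately show ?thesis
      using character_sum_eq_by_annihilator[OF _ q _ Y(2) y a(1) refl c[folded R]] Y(1) R
      by (auto simp: hamming_space_eq_words)
  qed
  then show thesis
    using P(2) by (intro that[of "of_real (c 0) * of_nat q ^ (D - m) / of_real (poly P 0)"]) (simp add: m_def)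
qed

section \<open>Codes on which the characters of weight \<open>\<delta>*\<close> are constant\<close>

lemma characters_constant_on_code:
  assumes q: "q \<ge> 1" and Y: "Y \<subseteq> hamming_space D q" "finite Y" and T: "dual_support D q Y \<noteq> {}"
    and far: "\<And>y y'. y \<in> Y \<Longrightarrow> y' \<in> Y \<Longrightarrow> y \<noteq> y' \<Longrightarrow>
               dual_dist D q Y + dual_degree D q Y - 1 < hdist D y y'"
    and a: "a \<in> words {..<D} q" "weight {..<D} a = dual_dist D q Y" and y: "y \<in> Y" "y' \<in> Y"
  shows "character {..<D} q a y = character {..<D} q a y'"
proof -
  obtain \<kappa> where \<kappa>: "\<And>a y. a \<in> words {..<D} q \<Longrightarrow> weight {..<D} a = dual_dist D q Y \<Longrightarrow> y \<in> Y \<Longrightarrow>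
      \<kappa> * character {..<D} q a y = character_sum {..<D} q Y a"
    using character_sum_proportional[OF q Y T far] by blast
  obtain a' where "a' \<in> words {..<D} q" "weight {..<D} a' = dual_dist D q Y"
      "character_sum {..<D} q Y a' \<noteq> 0"
    using dual_support_iff[OF q Y] dual_dist_in_dual_support[OF T] by blast
  then have "\<kappa> \<noteq> 0" using \<kappa>[of a' y] y(1) by auto
  then show ?thesis using \<kappa>[OF a y(1)] \<kappa>[OF a y(2)] by (metis mult_left_cancel)
qed

lemma character_eq_iff_dvd:
  assumes "q \<ge> 1"
  shows "character R q a y = character R q a y'
     \<longleftrightarrow> int q dvd (\<Sum>k\<in>R. int (a k) * (int (y k) - int (y' k)))"
proof -
  have "character R q a y = character R q a y'
      \<longleftrightarrow> int (\<Sum>k\<in>R. a k * y k) mod int q = int (\<Sum>k\<in>R. a k * y' k) mod int q"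
    unfolding character_eq_unit_root_power unit_root_power_eq_iff[OF assms]
    by (simp only: of_nat_mod[symmetric] of_nat_eq_iff)
  also have "\<dots> \<longleftrightarrow> int q dvd (\<Sum>k\<in>R. int (a k) * (int (y k) - int (y' k)))"
    by (simp add: mod_eq_dvd_iff sum_subtractf algebra_simps)
  finally show ?thesis .
qed

lemma dvd_of_characters_eq:
  assumes "1 < q" "i < D" "R0 \<subseteq> {..<D} - {i}" "0 < v" "v < q"
    and H: "\<And>a. a \<in> words {..<D} q \<Longrightarrow> weight {..<D} a = Suc (card R0) \<Longrightarrow>
             character {..<D} q a y = character {..<D} q a y'"
  shows "int q dvd int v * (int (y i) - int (y' i)) + (\<Sum>k\<in>R0. int (y k) - int (y' k))"
proof -
  define a where "a = (\<lambda>k. if k \<in> R0 then 1 else 0)(i := v)"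
  have "a \<in> words {..<D} q" using assms(1-3,5) by (auto simp: a_def words_def)
  moreover have "weight {..<D} a = Suc (card R0)"
  proof -
    have "{k\<in>{..<D}. a k \<noteq> 0} = insert i R0" using assms(2-4) by (auto simp: a_def)
    moreover have "finite R0" "i \<notin> R0" using assms(3) finite_subset by auto
    ultimately show ?thesis by (simp add: weight_def)
  qed
  ultimately have "int q dvd (\<Sum>k<D. int (a k) * (int (y k) - int (y' k)))"
    using H character_eq_iff_dvd[of q] assms(1) by simp
  also have "(\<Sum>k<D. int (a k) * (int (y k) - int (y' k)))
      = int v * (int (y i) - int (y' i)) + (\<Sum>k\<in>{..<D} - {i}. if k \<in> R0 then int (y k) - int (y' k) else 0)"
    using assms(2) by (subst sum.remove[of _ i]) (auto simp: a_def intro!: sum.cong split: if_splits)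
  also have "(\<Sum>k\<in>{..<D} - {i}. if k \<in> R0 then int (y k) - int (y' k) else 0) = (\<Sum>k\<in>R0. int (y k) - int (y' k))"
    using assms(3) by (simp add: sum.inter_restrict[symmetric] Int_absorb1)
  finally show ?thesis .
qed

lemma characters_eq_imp_dvd:
  assumes "1 < q" "1 \<le> m" "m + card S \<le> D + 1" "S \<subseteq> {..<D}"
    and H: "\<And>a. a \<in> words {..<D} q \<Longrightarrow> weight {..<D} a = m \<Longrightarrow>
             character {..<D} q a y = character {..<D} q a y'"
  shows "\<exists>R0. \<forall>i\<in>S. \<forall>v. 0 < v \<longrightarrow> v < q \<longrightarrow>
    int q dvd int v * (int (y i) - int (y' i)) + (\<Sum>k\<in>R0. int (y k) - int (y' k))"
proof -
  have "m - 1 \<le> card ({..<D} - S)"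
    using assms(2-4) card_Diff_subset[of S "{..<D}"] finite_subset[OF assms(4)] by simp
  then obtain R0 where R0: "R0 \<subseteq> {..<D} - S" "card R0 = m - 1"
    by (meson obtain_subset_with_card_n)
  have "int q dvd int v * (int (y i) - int (y' i)) + (\<Sum>k\<in>R0. int (y k) - int (y' k))"
    if "i \<in> S" "0 < v" "v < q" for i v
    using dvd_of_characters_eq[OF assms(1) _ _ that(2,3), of i D R0 y y'] H R0 assms(2,4) that(1) by auto
  then show ?thesis by blast
qed

text \<open>Testing the hypothesis on the word with entry \<open>v\<close> at \<open>i\<close> and \<open>1\<close> on \<open>m - 1\<close> further
  coordinates, \<open>v = 1, 2\<close> give \<open>q dvd y i - y' i\<close>, impossible unless \<open>q = 2\<close>; then comparing
  two coordinates \<open>i\<close>, \<open>j\<close> gives \<open>y i - y' i = y j - y' j\<close> modulo 2.\<close>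

lemma constant_characters_imp_antipodal:
  assumes q: "2 \<le> q" and m: "1 \<le> m" "m < D"
    and y: "y \<in> words {..<D} q" "y' \<in> words {..<D} q" "y \<noteq> y'"
    and H: "\<And>a. a \<in> words {..<D} q \<Longrightarrow> weight {..<D} a = m \<Longrightarrow>
             character {..<D} q a y = character {..<D} q a y'"
  shows "q = 2 \<and> hdist D y y' = D"
proof -
  define d where "d k = int (y k) - int (y' k)" for k
  have d_less: "\<bar>d k\<bar> < int q" if "k < D" for k
  proof -
    have "y k < q" "y' k < q" using y(1,2) that by (auto simp: words_def)
    then show ?thesis by (auto simp: d_def abs_less_iff)
  qed
  obtain i where i: "i < D" "d i \<noteq> 0"
    using words_neq_imp_coord_neq[OF y] by (auto simp: d_def)
  have "q = 2"
  proof (rule ccontr)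
    assume "q \<noteq> 2"
    have "1 < q" "m + card {i} \<le> D + 1" "{i} \<subseteq> {..<D}" using q m(2) i(1) by auto
    then obtain R0 where R0: "\<forall>k\<in>{i}. \<forall>v. 0 < v \<longrightarrow> v < q \<longrightarrow> int q dvd int v * d k + (\<Sum>k\<in>R0. d k)"
      using characters_eq_imp_dvd[OF _ m(1) _ _ H] unfolding d_def by blast
    have "int q dvd (2 * d i + (\<Sum>k\<in>R0. d k)) - (1 * d i + (\<Sum>k\<in>R0. d k))"
      using R0[rule_format, of i 2] R0[rule_format, of i 1] q \<open>q \<noteq> 2\<close> by (intro dvd_diff) simp_all
    then have "\<bar>int q\<bar> \<le> \<bar>d i\<bar>" by (intro dvd_imp_le_int[OF i(2)]) simp
    then show False using d_less[OF i(1)] by simp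
  qed
  moreover have "y j \<noteq> y' j" if j: "j < D" for j
  proof
    assume "y j = y' j"
    then have "j \<noteq> i" "d j = 0" using i(2) by (auto simp: d_def)
    have "1 < q" "m + card {i, j} \<le> D + 1" "{i, j} \<subseteq> {..<D}" using q m(2) i(1) j \<open>j \<noteq> i\<close> by auto
    then obtain R0 where R0: "\<forall>k\<in>{i, j}. \<forall>v. 0 < v \<longrightarrow> v < q \<longrightarrow> int q dvd int v * d k + (\<Sum>k\<in>R0. d k)"
      using characters_eq_imp_dvd[OF _ m(1) _ _ H] unfolding d_def by blast
    have "2 dvd (1 * d i + (\<Sum>k\<in>R0. d k)) - (1 * d j + (\<Sum>k\<in>R0. d k))"
      using R0[rule_format, of i 1] R0[rule_format, of j 1] \<open>q = 2\<close> by (intro dvd_diff) simp_all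
    then have "\<bar>2\<bar> \<le> \<bar>d i\<bar>" using \<open>d j = 0\<close> by (intro dvd_imp_le_int[OF i(2)]) simp
    then show False using d_less[OF i(1)] \<open>q = 2\<close> by simp
  qed
  ultimately show ?thesis by (simp add: hdist_eq_iff)
qed

lemma binary_antipode_unique:
  assumes "y \<in> words {..<D} 2" "z \<in> words {..<D} 2" "w \<in> words {..<D} 2"
    and "hdist D y z = D" "hdist D y w = D"
  shows "z = w"
proof (rule words_eqI[OF assms(2,3)])
  fix k assume "k \<in> {..<D}"
  then have "y k \<noteq> z k" "y k \<noteq> w k" "y k < 2" "z k < 2" "w k < 2"
    using assms by (auto simp: hdist_eq_iff words_def)
  then show "z k = w k" by linarith
qed

lemma far_code_is_antipodal:
  assumes q: "2 \<le> q" and Y: "Y \<subseteq> hamming_space D q" "finite Y" "card Y < q ^ D"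
    and far: "\<And>y y'. y \<in> Y \<Longrightarrow> y' \<in> Y \<Longrightarrow> y \<noteq> y' \<Longrightarrow>
               dual_dist D q Y + dual_degree D q Y - 1 < hdist D y y'"
    and y: "y \<in> Y" "y' \<in> Y" "y \<noteq> y'"
  shows "q = 2 \<and> hdist D y y' = D"
proof -
  let ?T = "dual_support D q Y"
  have T: "?T \<noteq> {}" using dual_support_nonempty[OF _ Y(1,2) y(1) Y(3)] q by simp
  have "dual_dist D q Y \<in> {1..D}" "dual_degree D q Y \<noteq> 0"
    using dual_dist_in_dual_support[OF T] dual_support_subset[of D q Y] dual_degree_pos[OF T] by auto
  moreover have "hdist D y y' \<le> D"
    using dist_on_le_card[of "{..<D}" y y'] by (simp add: hdist_eq_dist_on)
  ultimately have "1 \<le> dual_dist D q Y" "dual_dist D q Y < D"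
    using far[OF y] by auto
  moreover have "y \<in> words {..<D} q" "y' \<in> words {..<D} q"
    using Y(1) y by (auto simp: hamming_space_eq_words)
  moreover have "character {..<D} q a y = character {..<D} q a y'"
    if "a \<in> words {..<D} q" "weight {..<D} a = dual_dist D q Y" for a
    using characters_constant_on_code[OF _ Y(1,2) T far that y(1,2)] q by simp
  ultimately show ?thesis
    using constant_characters_imp_antipodal[OF q, of "dual_dist D q Y" D y y'] y(3) by blast
qed

theorem mainTheorem11:
  fixes D q :: nat and Y :: "(nat \<Rightarrow> nat) set"
  assumes "D \<ge> 3" and "q \<ge> 2"
    and "Y \<subseteq> hamming_space D q"
    and "1 < card Y" and "card Y < q ^ D"
    and "\<not> (q = 2 \<and> (\<exists>u v. Y = {u, v} \<and> hdist D u v = D))"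
  shows "min_dist D Y \<le> dual_dist D q Y + dual_degree D q Y - 1"
proof (rule ccontr)
  assume "\<not> min_dist D Y \<le> dual_dist D q Y + dual_degree D q Y - 1"
  then have gap: "dual_dist D q Y + dual_degree D q Y - 1 < min_dist D Y" by simp
  have finY: "finite Y" using assms(4) card.infinite by fastforce
  have antipodal: "q = 2 \<and> hdist D y y' = D" if "y \<in> Y" "y' \<in> Y" "y \<noteq> y'" for y y'
  proof (rule far_code_is_antipodal[OF assms(2,3) finY assms(5) _ that])
    show "dual_dist D q Y + dual_degree D q Y - 1 < hdist D z z'" if "z \<in> Y" "z' \<in> Y" "z \<noteq> z'" for z z'
      using gap min_dist_le_hdist[OF assms(3) finY that] by simp
  qed
  obtain y1 y2 where y12: "y1 \<in> Y" "y2 \<in> Y" "y1 \<noteq> y2"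
    using assms(4) card_le_Suc0_iff_eq[OF finY] by (auto simp: not_le[symmetric])
  have words: "Y \<subseteq> words {..<D} 2"
    using assms(3) antipodal[OF y12] by (simp add: hamming_space_eq_words)
  have "Y = {y1, y2}"
  proof (intro equalityI subsetI)
    fix z assume "z \<in> Y"
    then have "z = y2" if "z \<noteq> y1"
      using binary_antipode_unique[of y1 D z y2] antipodal[of y1 z] antipodal[OF y12] y12(1,2) words that
      by (auto simp: subset_iff)
    then show "z \<in> {y1, y2}" by blast
  qed (use y12 in auto)
  then show False using assms(6) antipodal[OF y12] by blast
qed

end
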